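(* Let $(\mathbb{X},\dagger)$ be a Moore-Penrose dagger additive category, and let $\begin{bmatrix}\alpha&\beta\\ \beta^\dagger&\delta\end{bmatrix}:B\oplus C\to B\oplus C$ be a $\dagger$-positive map. Then a map $m:B\to C$ is a conditional generator of this $\dagger$-positive map if and only if $m\circ\alpha=\beta^\dagger$.
   Context: A dagger additive category is a dagger category (contravariant identity-on-objects involutive functor $\dagger$) whose hom-sets are abelian groups with bilinear composition and additive $\dagger$, having a zero object and finite biproducts whose projections $\pi_j$ and injections $\iota_j$ satisfy $\pi_j^\dagger=\iota_j$. Maps between biproducts are written as matrices; composition is matrix multiplication and $\dagger$ is transpose with entrywise $\dagger$. An endomorphism $p$ is $\dagger$-positive if $p=\phi^\dagger\circ\phi$ for some map $\phi$. A Moore-Penrose inverse of $f:A\to B$ is a map $f^\circ:B\to A$ with $f f^\circ f=f$, $f^\circ f f^\circ=f^\circ$, $(f f^\circ)^\dagger=f f^\circ$, $(f^\circ f)^\dagger=f^\circ f$; a Moore-Penrose dagger additive category is one in which every map has a Moore-Penrose inverse. A conditional generator for a $\dagger$-positive map $\begin{bmatrix}\alpha&\beta\\ \beta^\dagger&\delta\end{bmatrix}:B\oplus C\to B\oplus C$ (with $\alpha:B\to B$, $\beta:C\to B$, $\delta:C\to C$) is a map $m:B\to C$ with (i) $m\circ\alpha=\beta^\dagger$ and (ii) $\delta-m\circ\beta$ is $\dagger$-positive. *)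

theory Defs
  imports Main
begin

text \<open>A dagger additive category, presented concretely: objects of type 'o,
  morphisms of type 'm, hom-sets given by hom A B (pairwise disjoint),
  composition cmp g f = g after f, chosen zero object and chosen binary
  biproducts (binary biproducts plus a zero object give all finite biproducts).\<close>

record ('o, 'm) dac =
  hom  :: "'o \<Rightarrow> 'o \<Rightarrow> 'm set"
  cmp  :: "'m \<Rightarrow> 'm \<Rightarrow> 'm"
  idm  :: "'o \<Rightarrow> 'm"
  dag  :: "'m \<Rightarrow> 'm"
  pls  :: "'m \<Rightarrow> 'm \<Rightarrow> 'm"
  neg  :: "'m \<Rightarrow> 'm"
  zro  :: "'o \<Rightarrow> 'o \<Rightarrow> 'm"
  zobj :: "'o"
  bp   :: "'o \<Rightarrow> 'o \<Rightarrow> 'o"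
  pr1  :: "'o \<Rightarrow> 'o \<Rightarrow> 'm"
  pr2  :: "'o \<Rightarrow> 'o \<Rightarrow> 'm"
  in1  :: "'o \<Rightarrow> 'o \<Rightarrow> 'm"
  in2  :: "'o \<Rightarrow> 'o \<Rightarrow> 'm"

definition is_category :: "('o, 'm, 'z) dac_scheme \<Rightarrow> bool" where
  "is_category X \<longleftrightarrow>
     (\<forall>A B A' B' f. f \<in> hom X A B \<longrightarrow> f \<in> hom X A' B' \<longrightarrow> A = A' \<and> B = B') \<and>
     (\<forall>A. idm X A \<in> hom X A A) \<and>
     (\<forall>A B C f g. f \<in> hom X A B \<longrightarrow> g \<in> hom X B C \<longrightarrow> cmp X g f \<in> hom X A C) \<and>
     (\<forall>A B f. f \<in> hom X A B \<longrightarrow> cmp X f (idm X A) = f \<and> cmp X (idm X B) f = f) \<and>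
     (\<forall>A B C D f g h. f \<in> hom X A B \<longrightarrow> g \<in> hom X B C \<longrightarrow> h \<in> hom X C D \<longrightarrow>
        cmp X h (cmp X g f) = cmp X (cmp X h g) f)"

definition is_dagger :: "('o, 'm, 'z) dac_scheme \<Rightarrow> bool" where
  "is_dagger X \<longleftrightarrow>
     (\<forall>A B f. f \<in> hom X A B \<longrightarrow> dag X f \<in> hom X B A \<and> dag X (dag X f) = f) \<and>
     (\<forall>A. dag X (idm X A) = idm X A) \<and>
     (\<forall>A B C f g. f \<in> hom X A B \<longrightarrow> g \<in> hom X B C \<longrightarrow>
        dag X (cmp X g f) = cmp X (dag X f) (dag X g))"

definition is_additive :: "('o, 'm, 'z) dac_scheme \<Rightarrow> bool" where
  "is_additive X \<longleftrightarrow>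
     (\<forall>A B. zro X A B \<in> hom X A B) \<and>
     (\<forall>A B f g. f \<in> hom X A B \<longrightarrow> g \<in> hom X A B \<longrightarrow>
        pls X f g \<in> hom X A B \<and> neg X f \<in> hom X A B \<and> pls X f g = pls X g f \<and>
        pls X f (zro X A B) = f \<and> pls X f (neg X f) = zro X A B) \<and>
     (\<forall>A B f g h. f \<in> hom X A B \<longrightarrow> g \<in> hom X A B \<longrightarrow> h \<in> hom X A B \<longrightarrow>
        pls X (pls X f g) h = pls X f (pls X g h)) \<and>
     (\<forall>A B C f f' g. f \<in> hom X A B \<longrightarrow> f' \<in> hom X A B \<longrightarrow> g \<in> hom X B C \<longrightarrow>
        cmp X g (pls X f f') = pls X (cmp X g f) (cmp X g f')) \<and>
     (\<forall>A B C f g g'. f \<in> hom X A B \<longrightarrow> g \<in> hom X B C \<longrightarrow> g' \<in> hom X B C \<longrightarrow>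
        cmp X (pls X g g') f = pls X (cmp X g f) (cmp X g' f)) \<and>
     (\<forall>A B f g. f \<in> hom X A B \<longrightarrow> g \<in> hom X A B \<longrightarrow>
        dag X (pls X f g) = pls X (dag X f) (dag X g))"

definition has_dagger_biproducts :: "('o, 'm, 'z) dac_scheme \<Rightarrow> bool" where
  "has_dagger_biproducts X \<longleftrightarrow>
     (\<forall>A. hom X (zobj X) A = {zro X (zobj X) A} \<and> hom X A (zobj X) = {zro X A (zobj X)}) \<and>
     (\<forall>A B. pr1 X A B \<in> hom X (bp X A B) A \<and> pr2 X A B \<in> hom X (bp X A B) B \<and>
            in1 X A B \<in> hom X A (bp X A B) \<and> in2 X A B \<in> hom X B (bp X A B) \<and>
            cmp X (pr1 X A B) (in1 X A B) = idm X A \<and>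
            cmp X (pr2 X A B) (in2 X A B) = idm X B \<and>
            cmp X (pr1 X A B) (in2 X A B) = zro X B A \<and>
            cmp X (pr2 X A B) (in1 X A B) = zro X A B \<and>
            pls X (cmp X (in1 X A B) (pr1 X A B)) (cmp X (in2 X A B) (pr2 X A B))
              = idm X (bp X A B) \<and>
            dag X (pr1 X A B) = in1 X A B \<and> dag X (pr2 X A B) = in2 X A B)"

definition dagger_additive_category :: "('o, 'm, 'z) dac_scheme \<Rightarrow> bool" where
  "dagger_additive_category X \<longleftrightarrow>
     is_category X \<and> is_dagger X \<and> is_additive X \<and> has_dagger_biproducts X"

definition moore_penrose_inverse :: "('o, 'm, 'z) dac_scheme \<Rightarrow> 'm \<Rightarrow> 'm \<Rightarrow> bool" where
  "moore_penrose_inverse X f g \<longleftrightarrow>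
     cmp X f (cmp X g f) = f \<and> cmp X g (cmp X f g) = g \<and>
     dag X (cmp X f g) = cmp X f g \<and> dag X (cmp X g f) = cmp X g f"

definition MP_dagger_additive_category :: "('o, 'm, 'z) dac_scheme \<Rightarrow> bool" where
  "MP_dagger_additive_category X \<longleftrightarrow> dagger_additive_category X \<and>
     (\<forall>A B f. f \<in> hom X A B \<longrightarrow> (\<exists>g \<in> hom X B A. moore_penrose_inverse X f g))"

definition dagger_positive :: "('o, 'm, 'z) dac_scheme \<Rightarrow> 'o \<Rightarrow> 'm \<Rightarrow> bool" where
  "dagger_positive X A p \<longleftrightarrow> p \<in> hom X A A \<and>
     (\<exists>D phi. phi \<in> hom X A D \<and> p = cmp X (dag X phi) phi)"

definition block :: "('o, 'm, 'z) dac_scheme \<Rightarrow> 'o \<Rightarrow> 'o \<Rightarrow> 'm \<Rightarrow> 'm \<Rightarrow> 'm \<Rightarrow> 'm \<Rightarrow> 'm" where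
  "block X B C a b c d =
     pls X (pls X (cmp X (in1 X B C) (cmp X a (pr1 X B C)))
                  (cmp X (in1 X B C) (cmp X b (pr2 X B C))))
           (pls X (cmp X (in2 X B C) (cmp X c (pr1 X B C)))
                  (cmp X (in2 X B C) (cmp X d (pr2 X B C))))"

definition conditional_generator ::
  "('o, 'm, 'z) dac_scheme \<Rightarrow> 'o \<Rightarrow> 'o \<Rightarrow> 'm \<Rightarrow> 'm \<Rightarrow> 'm \<Rightarrow> 'm \<Rightarrow> bool" where
  "conditional_generator X B C a b d m \<longleftrightarrow> m \<in> hom X B C \<and>
     cmp X m a = dag X b \<and>
     dagger_positive X C (pls X d (neg X (cmp X m b)))"

end

theory Submission
  imports Defs
begin

(* Factor the positive block matrix as \<phi>\<^sup>\<dagger>\<phi> with \<phi> : B \<oplus> C \<rightarrow> D. Its entries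
  form a Gram matrix: with p = \<phi>\<iota>\<^sub>1 and q = \<phi>\<iota>\<^sub>2 we get \<alpha> = p\<^sup>\<dagger>p, \<beta> = p\<^sup>\<dagger>q and
  \<delta> = q\<^sup>\<dagger>q. If m\<alpha> = \<beta>\<^sup>\<dagger>, the map \<psi> = q - pm\<^sup>\<dagger> satisfies \<psi>\<^sup>\<dagger>\<psi> = \<delta> - m\<beta>, since both
  cross terms q\<^sup>\<dagger>pm\<^sup>\<dagger> and mp\<^sup>\<dagger>pm\<^sup>\<dagger> equal \<beta>\<^sup>\<dagger>m\<^sup>\<dagger> and cancel. So condition (ii) of a
  conditional generator follows from (i). *)

locale dagger_additive =
  fixes X :: "('o, 'm, 'z) dac_scheme"
  assumes dagger_additive_category: "dagger_additive_category X"
begin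

abbreviation cat_comp :: "'m \<Rightarrow> 'm \<Rightarrow> 'm" (infixr "\<cdot>" 70)
  where "g \<cdot> f \<equiv> cmp X g f"
abbreviation cat_dag :: "'m \<Rightarrow> 'm" ("_\<^sup>\<dagger>" [1000] 1000)
  where "f\<^sup>\<dagger> \<equiv> dag X f"
abbreviation cat_add :: "'m \<Rightarrow> 'm \<Rightarrow> 'm" (infixl "\<oplus>" 65)
  where "f \<oplus> g \<equiv> pls X f g"
abbreviation cat_diff :: "'m \<Rightarrow> 'm \<Rightarrow> 'm" (infixl "\<ominus>" 65)
  where "f \<ominus> g \<equiv> pls X f (neg X g)"

lemma
  shows comp_closed: "f \<in> hom X A B \<Longrightarrow> g \<in> hom X B C \<Longrightarrow> g \<cdot> f \<in> hom X A C"
    and comp_assoc: "f \<in> hom X A B \<Longrightarrow> g \<in> hom X B C \<Longrightarrow> h \<in> hom X C D \<Longrightarrow>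
      h \<cdot> g \<cdot> f = (h \<cdot> g) \<cdot> f"
    and comp_id_right: "f \<in> hom X A B \<Longrightarrow> f \<cdot> idm X A = f"
    and comp_id_left: "f \<in> hom X A B \<Longrightarrow> idm X B \<cdot> f = f"
  using dagger_additive_category
  by (auto simp: dagger_additive_category_def is_category_def)

lemma
  shows dag_closed: "f \<in> hom X A B \<Longrightarrow> f\<^sup>\<dagger> \<in> hom X B A"
    and dag_dag: "f \<in> hom X A B \<Longrightarrow> f\<^sup>\<dagger>\<^sup>\<dagger> = f"
    and dag_comp: "f \<in> hom X A B \<Longrightarrow> g \<in> hom X B C \<Longrightarrow> (g \<cdot> f)\<^sup>\<dagger> = f\<^sup>\<dagger> \<cdot> g\<^sup>\<dagger>"
  using dagger_additive_category
  by (auto simp: dagger_additive_category_def is_dagger_def)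

lemma
  shows zero_closed: "zro X A B \<in> hom X A B"
    and add_closed: "f \<in> hom X A B \<Longrightarrow> g \<in> hom X A B \<Longrightarrow> f \<oplus> g \<in> hom X A B"
    and neg_closed: "f \<in> hom X A B \<Longrightarrow> neg X f \<in> hom X A B"
    and add_commute: "f \<in> hom X A B \<Longrightarrow> g \<in> hom X A B \<Longrightarrow> f \<oplus> g = g \<oplus> f"
    and add_zero: "f \<in> hom X A B \<Longrightarrow> f \<oplus> zro X A B = f"
    and diff_self: "f \<in> hom X A B \<Longrightarrow> f \<ominus> f = zro X A B"
    and add_assoc: "f \<in> hom X A B \<Longrightarrow> g \<in> hom X A B \<Longrightarrow> h \<in> hom X A B \<Longrightarrow>
      f \<oplus> g \<oplus> h = f \<oplus> (g \<oplus> h)"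
    and comp_add_right: "f \<in> hom X A B \<Longrightarrow> f' \<in> hom X A B \<Longrightarrow> g \<in> hom X B C \<Longrightarrow>
      g \<cdot> (f \<oplus> f') = g \<cdot> f \<oplus> g \<cdot> f'"
    and comp_add_left: "f \<in> hom X A B \<Longrightarrow> g \<in> hom X B C \<Longrightarrow> g' \<in> hom X B C \<Longrightarrow>
      (g \<oplus> g') \<cdot> f = g \<cdot> f \<oplus> g' \<cdot> f"
    and dag_add: "f \<in> hom X A B \<Longrightarrow> g \<in> hom X A B \<Longrightarrow> (f \<oplus> g)\<^sup>\<dagger> = f\<^sup>\<dagger> \<oplus> g\<^sup>\<dagger>"
  using dagger_additive_category
  by (auto simp: dagger_additive_category_def is_additive_def)

lemma
  shows pr1_closed: "pr1 X A B \<in> hom X (bp X A B) A"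
    and pr2_closed: "pr2 X A B \<in> hom X (bp X A B) B"
    and in1_closed: "in1 X A B \<in> hom X A (bp X A B)"
    and in2_closed: "in2 X A B \<in> hom X B (bp X A B)"
    and pr1_in1: "pr1 X A B \<cdot> in1 X A B = idm X A"
    and pr2_in2: "pr2 X A B \<cdot> in2 X A B = idm X B"
    and pr1_in2: "pr1 X A B \<cdot> in2 X A B = zro X B A"
    and pr2_in1: "pr2 X A B \<cdot> in1 X A B = zro X A B"
    and dag_pr1: "(pr1 X A B)\<^sup>\<dagger> = in1 X A B"
    and dag_pr2: "(pr2 X A B)\<^sup>\<dagger> = in2 X A B"
  using dagger_additive_category
  by (auto simp: dagger_additive_category_def has_dagger_biproducts_def)

lemma zero_add: "f \<in> hom X A B \<Longrightarrow> zro X A B \<oplus> f = f"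
  using add_commute add_zero zero_closed by metis

lemma neg_add_cancel_left:
  assumes "f \<in> hom X A B" "g \<in> hom X A B"
  shows "neg X f \<oplus> (f \<oplus> g) = g"
proof -
  have "neg X f \<oplus> (f \<oplus> g) = (f \<ominus> f) \<oplus> g"
    using assms add_assoc add_commute neg_closed by metis
  then show ?thesis
    using assms diff_self zero_add by simp
qed

lemma add_left_cancel:
  assumes "f \<in> hom X A B" "g \<in> hom X A B" "h \<in> hom X A B" "f \<oplus> g = f \<oplus> h"
  shows "g = h"
  using neg_add_cancel_left[of f A B] assms by metis

lemma neg_unique:
  assumes "f \<in> hom X A B" "g \<in> hom X A B" "f \<oplus> g = zro X A B"
  shows "neg X f = g"
  using add_left_cancel[of f A B] diff_self neg_closed assms by metis

lemma add_idem_zero: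
  assumes "f \<in> hom X A B" "f \<oplus> f = f"
  shows "f = zro X A B"
  using add_left_cancel[of f A B] add_zero zero_closed assms by metis

lemma diff_diff_cancel:
  assumes f: "f \<in> hom X A B" and g: "g \<in> hom X A B" and h: "h \<in> hom X A B"
  shows "f \<ominus> g \<ominus> (h \<ominus> g) = f \<ominus> h"
proof -
  have shift: "k \<ominus> g \<oplus> (g \<ominus> h) = k \<ominus> h" if k: "k \<in> hom X A B" for k
    using add_assoc[OF k neg_closed[OF g] add_closed[OF g neg_closed[OF h]]]
      neg_add_cancel_left[OF g neg_closed[OF h]] by simp
  have "neg X (h \<ominus> g) = g \<ominus> h"
    using neg_unique[OF add_closed[OF h neg_closed[OF g]] add_closed[OF g neg_closed[OF h]]]
      shift[OF h] diff_self[OF h] by simp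
  then show ?thesis
    using shift[OF f] by simp
qed

lemma comp_zero_right: "g \<in> hom X B C \<Longrightarrow> g \<cdot> zro X A B = zro X A C"
  using add_idem_zero[OF comp_closed[OF zero_closed]]
    comp_add_right[OF zero_closed zero_closed] add_zero[OF zero_closed] by metis

lemma comp_zero_left: "f \<in> hom X A B \<Longrightarrow> zro X B C \<cdot> f = zro X A C"
  using add_idem_zero[OF comp_closed[OF _ zero_closed]]
    comp_add_left[OF _ zero_closed zero_closed] add_zero[OF zero_closed] by metis

lemma dag_zero: "(zro X A B)\<^sup>\<dagger> = zro X B A"
  using add_idem_zero[OF dag_closed[OF zero_closed]]
    dag_add[OF zero_closed zero_closed] add_zero[OF zero_closed] by metis

lemma comp_neg_right:
  assumes "f \<in> hom X A B" "g \<in> hom X B C"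
  shows "g \<cdot> neg X f = neg X (g \<cdot> f)"
  using neg_unique[OF comp_closed[OF assms] comp_closed[OF neg_closed[OF assms(1)] assms(2)]]
    comp_add_right[OF assms(1) neg_closed[OF assms(1)] assms(2)]
    diff_self[OF assms(1)] comp_zero_right[OF assms(2)] by simp

lemma comp_neg_left:
  assumes "f \<in> hom X A B" "g \<in> hom X B C"
  shows "neg X g \<cdot> f = neg X (g \<cdot> f)"
  using neg_unique[OF comp_closed[OF assms] comp_closed[OF assms(1) neg_closed[OF assms(2)]]]
    comp_add_left[OF assms(1) assms(2) neg_closed[OF assms(2)]]
    diff_self[OF assms(2)] comp_zero_left[OF assms(1)] by simp

lemma dag_neg:
  assumes "f \<in> hom X A B"
  shows "(neg X f)\<^sup>\<dagger> = neg X (f\<^sup>\<dagger>)"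
  using neg_unique[OF dag_closed[OF assms] dag_closed[OF neg_closed[OF assms]]]
    dag_add[OF assms neg_closed[OF assms]] diff_self[OF assms] dag_zero by simp

lemma comp_diff_right:
  assumes "f \<in> hom X A B" "f' \<in> hom X A B" "g \<in> hom X B C"
  shows "g \<cdot> (f \<ominus> f') = g \<cdot> f \<ominus> g \<cdot> f'"
  using comp_add_right[OF assms(1) neg_closed[OF assms(2)] assms(3)]
    comp_neg_right[OF assms(2,3)] by simp

lemma comp_diff_left:
  assumes "f \<in> hom X A B" "g \<in> hom X B C" "g' \<in> hom X B C"
  shows "(g \<ominus> g') \<cdot> f = g \<cdot> f \<ominus> g' \<cdot> f"
  using comp_add_left[OF assms(1,2) neg_closed[OF assms(3)]]
    comp_neg_left[OF assms(1,3)] by simp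

lemma dag_diff:
  assumes "f \<in> hom X A B" "g \<in> hom X A B"
  shows "(f \<ominus> g)\<^sup>\<dagger> = f\<^sup>\<dagger> \<ominus> g\<^sup>\<dagger>"
  using dag_add[OF assms(1) neg_closed[OF assms(2)]] dag_neg[OF assms(2)] by simp

lemma comp_assoc4:
  assumes "e \<in> hom X A B" "f \<in> hom X B C" "g \<in> hom X C D" "h \<in> hom X D E"
  shows "(h \<cdot> g \<cdot> f) \<cdot> e = h \<cdot> g \<cdot> f \<cdot> e"
  using comp_assoc[OF assms(1) comp_closed[OF assms(2,3)] assms(4)]
    comp_assoc[OF assms(1-3)] by simp

lemma pr1_comp_column:
  assumes "x \<in> hom X A B" "y \<in> hom X A C"
  shows "pr1 X B C \<cdot> (in1 X B C \<cdot> x \<oplus> in2 X B C \<cdot> y) = x"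
  using comp_add_right[OF comp_closed[OF assms(1) in1_closed] comp_closed[OF assms(2) in2_closed]
      pr1_closed]
    comp_assoc[OF assms(1) in1_closed pr1_closed] comp_assoc[OF assms(2) in2_closed pr1_closed]
  using assms by (simp add: pr1_in1 pr1_in2 comp_id_left comp_zero_left add_zero)

lemma pr2_comp_column:
  assumes "x \<in> hom X A B" "y \<in> hom X A C"
  shows "pr2 X B C \<cdot> (in1 X B C \<cdot> x \<oplus> in2 X B C \<cdot> y) = y"
  using comp_add_right[OF comp_closed[OF assms(1) in1_closed] comp_closed[OF assms(2) in2_closed]
      pr2_closed]
    comp_assoc[OF assms(1) in1_closed pr2_closed] comp_assoc[OF assms(2) in2_closed pr2_closed]
  using assms by (simp add: pr2_in1 pr2_in2 comp_id_left comp_zero_left zero_add)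

lemma block_comp:
  assumes a: "a \<in> hom X B B" and b: "b \<in> hom X C B" and c: "c \<in> hom X B C"
    and d: "d \<in> hom X C C" and q: "q \<in> hom X A (bp X B C)"
  shows "block X B C a b c d \<cdot> q =
    in1 X B C \<cdot> a \<cdot> pr1 X B C \<cdot> q \<oplus> in1 X B C \<cdot> b \<cdot> pr2 X B C \<cdot> q \<oplus>
    (in2 X B C \<cdot> c \<cdot> pr1 X B C \<cdot> q \<oplus> in2 X B C \<cdot> d \<cdot> pr2 X B C \<cdot> q)"
proof -
  have entries:
    "in1 X B C \<cdot> a \<cdot> pr1 X B C \<in> hom X (bp X B C) (bp X B C)"
    "in1 X B C \<cdot> b \<cdot> pr2 X B C \<in> hom X (bp X B C) (bp X B C)"
    "in2 X B C \<cdot> c \<cdot> pr1 X B C \<in> hom X (bp X B C) (bp X B C)"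
    "in2 X B C \<cdot> d \<cdot> pr2 X B C \<in> hom X (bp X B C) (bp X B C)"
    using a b c d by (meson comp_closed pr1_closed pr2_closed in1_closed in2_closed)+
  show ?thesis
    unfolding block_def
    using comp_add_left[OF q add_closed[OF entries(1,2)] add_closed[OF entries(3,4)]]
      comp_add_left[OF q entries(1,2)] comp_add_left[OF q entries(3,4)]
      comp_assoc4[OF q pr1_closed a in1_closed] comp_assoc4[OF q pr2_closed b in1_closed]
      comp_assoc4[OF q pr1_closed c in2_closed] comp_assoc4[OF q pr2_closed d in2_closed]
    by simp
qed

lemma
  assumes a: "a \<in> hom X B B" and b: "b \<in> hom X C B" and c: "c \<in> hom X B C"
    and d: "d \<in> hom X C C"
  shows block_comp_in1: "block X B C a b c d \<cdot> in1 X B C = in1 X B C \<cdot> a \<oplus> in2 X B C \<cdot> c"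
    and block_comp_in2: "block X B C a b c d \<cdot> in2 X B C = in1 X B C \<cdot> b \<oplus> in2 X B C \<cdot> d"
  using block_comp[OF assms in1_closed] block_comp[OF assms in2_closed] assms
    in1_closed[of B C] in2_closed[of B C]
    comp_closed[OF a in1_closed, of C] comp_closed[OF c in2_closed, of B]
    comp_closed[OF b in1_closed, of C] comp_closed[OF d in2_closed, of B]
  by (simp_all add: pr1_in1 pr2_in1 pr1_in2 pr2_in2 comp_id_right comp_zero_right add_zero zero_add)

lemma dag_in1: "(in1 X A B)\<^sup>\<dagger> = pr1 X A B"
  using dag_dag[OF pr1_closed] dag_pr1 by metis

lemma dag_in2: "(in2 X A B)\<^sup>\<dagger> = pr2 X A B"
  using dag_dag[OF pr2_closed] dag_pr2 by metis

lemma gram_entry: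
  assumes \<phi>: "\<phi> \<in> hom X S D" and u: "u \<in> hom X U S" and v: "v \<in> hom X V S"
  shows "u\<^sup>\<dagger> \<cdot> (\<phi>\<^sup>\<dagger> \<cdot> \<phi>) \<cdot> v = (\<phi> \<cdot> u)\<^sup>\<dagger> \<cdot> \<phi> \<cdot> v"
proof -
  have "u\<^sup>\<dagger> \<cdot> (\<phi>\<^sup>\<dagger> \<cdot> \<phi>) \<cdot> v = u\<^sup>\<dagger> \<cdot> \<phi>\<^sup>\<dagger> \<cdot> \<phi> \<cdot> v"
    using comp_assoc[OF v \<phi> dag_closed[OF \<phi>]] by simp
  also have "\<dots> = (u\<^sup>\<dagger> \<cdot> \<phi>\<^sup>\<dagger>) \<cdot> \<phi> \<cdot> v"
    using comp_assoc[OF comp_closed[OF v \<phi>] dag_closed[OF \<phi>] dag_closed[OF u]] .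
  finally show ?thesis
    using dag_comp[OF u \<phi>] by simp
qed

lemma positive_block_gram:
  assumes a: "a \<in> hom X B B" and b: "b \<in> hom X C B" and d: "d \<in> hom X C C"
    and pos: "dagger_positive X (bp X B C) (block X B C a b (b\<^sup>\<dagger>) d)"
  obtains D p q where "p \<in> hom X B D" "q \<in> hom X C D"
    and "a = p\<^sup>\<dagger> \<cdot> p" "b = p\<^sup>\<dagger> \<cdot> q" "d = q\<^sup>\<dagger> \<cdot> q"
proof -
  obtain D \<phi> where \<phi>: "\<phi> \<in> hom X (bp X B C) D"
    and gram: "block X B C a b (b\<^sup>\<dagger>) d = \<phi>\<^sup>\<dagger> \<cdot> \<phi>"
    using pos unfolding dagger_positive_def by blast
  have c: "b\<^sup>\<dagger> \<in> hom X B C"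
    using dag_closed[OF b] .
  have "a = pr1 X B C \<cdot> block X B C a b (b\<^sup>\<dagger>) d \<cdot> in1 X B C"
    using block_comp_in1[OF a b c d] pr1_comp_column[OF a c] by simp
  moreover have "b = pr1 X B C \<cdot> block X B C a b (b\<^sup>\<dagger>) d \<cdot> in2 X B C"
    using block_comp_in2[OF a b c d] pr1_comp_column[OF b d] by simp
  moreover have "d = pr2 X B C \<cdot> block X B C a b (b\<^sup>\<dagger>) d \<cdot> in2 X B C"
    using block_comp_in2[OF a b c d] pr2_comp_column[OF b d] by simp
  ultimately show ?thesis
    using that[OF comp_closed[OF in1_closed \<phi>] comp_closed[OF in2_closed \<phi>]]
      gram_entry[OF \<phi> in1_closed in1_closed] gram_entry[OF \<phi> in1_closed in2_closed]
      gram_entry[OF \<phi> in2_closed in2_closed]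
    unfolding gram dag_in1 dag_in2 by simp
qed

lemma gram_schur_complement:
  assumes p: "p \<in> hom X B D" and q: "q \<in> hom X C D" and m: "m \<in> hom X B C"
    and normal: "m \<cdot> p\<^sup>\<dagger> \<cdot> p = (p\<^sup>\<dagger> \<cdot> q)\<^sup>\<dagger>"
  shows "(q \<ominus> p \<cdot> m\<^sup>\<dagger>)\<^sup>\<dagger> \<cdot> (q \<ominus> p \<cdot> m\<^sup>\<dagger>) = q\<^sup>\<dagger> \<cdot> q \<ominus> m \<cdot> p\<^sup>\<dagger> \<cdot> q"
proof -
  define e where "e = p \<cdot> m\<^sup>\<dagger>"
  have e: "e \<in> hom X C D"
    unfolding e_def using comp_closed[OF dag_closed[OF m] p] .
  have dag_e: "e\<^sup>\<dagger> = m \<cdot> p\<^sup>\<dagger>"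
    unfolding e_def using dag_comp[OF dag_closed[OF m] p] dag_dag[OF m] by simp
  have q_e: "q\<^sup>\<dagger> \<cdot> e = (p\<^sup>\<dagger> \<cdot> q)\<^sup>\<dagger> \<cdot> m\<^sup>\<dagger>"
    unfolding e_def
    using comp_assoc[OF dag_closed[OF m] p dag_closed[OF q]] dag_comp[OF q dag_closed[OF p]]
      dag_dag[OF p] by simp
  have e_e: "e\<^sup>\<dagger> \<cdot> e = q\<^sup>\<dagger> \<cdot> e"
  proof -
    have "e\<^sup>\<dagger> \<cdot> e = (m \<cdot> p\<^sup>\<dagger> \<cdot> p) \<cdot> m\<^sup>\<dagger>"
      using dag_e comp_assoc4[OF dag_closed[OF m] p dag_closed[OF p] m]
        comp_assoc[OF comp_closed[OF dag_closed[OF m] p] dag_closed[OF p] m]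
      unfolding e_def by simp
    then show ?thesis
      unfolding normal q_e .
  qed
  have e_q: "e\<^sup>\<dagger> \<cdot> q = m \<cdot> p\<^sup>\<dagger> \<cdot> q"
    unfolding dag_e using comp_assoc[OF q dag_closed[OF p] m] by simp
  have "(q \<ominus> e)\<^sup>\<dagger> \<cdot> (q \<ominus> e) = q\<^sup>\<dagger> \<cdot> (q \<ominus> e) \<ominus> e\<^sup>\<dagger> \<cdot> (q \<ominus> e)"
    unfolding dag_diff[OF q e]
    using comp_diff_left[OF add_closed[OF q neg_closed[OF e]] dag_closed[OF q] dag_closed[OF e]] .
  also have "\<dots> = q\<^sup>\<dagger> \<cdot> q \<ominus> e\<^sup>\<dagger> \<cdot> e \<ominus> (m \<cdot> p\<^sup>\<dagger> \<cdot> q \<ominus> e\<^sup>\<dagger> \<cdot> e)"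
    using comp_diff_right[OF q e dag_closed[OF q]] comp_diff_right[OF q e dag_closed[OF e]]
    unfolding e_e e_q by simp
  also have "\<dots> = q\<^sup>\<dagger> \<cdot> q \<ominus> m \<cdot> p\<^sup>\<dagger> \<cdot> q"
    using diff_diff_cancel comp_closed dag_closed e m p q by meson
  finally show ?thesis
    unfolding e_def .
qed

lemma conditional_generator_iff:
  assumes a: "a \<in> hom X B B" and b: "b \<in> hom X C B" and d: "d \<in> hom X C C"
    and pos: "dagger_positive X (bp X B C) (block X B C a b (b\<^sup>\<dagger>) d)"
    and m: "m \<in> hom X B C"
  shows "conditional_generator X B C a b d m \<longleftrightarrow> m \<cdot> a = b\<^sup>\<dagger>"
proof
  assume normal: "m \<cdot> a = b\<^sup>\<dagger>"
  obtain D p q where p: "p \<in> hom X B D" and q: "q \<in> hom X C D"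
    and gram: "a = p\<^sup>\<dagger> \<cdot> p" "b = p\<^sup>\<dagger> \<cdot> q" "d = q\<^sup>\<dagger> \<cdot> q"
    using positive_block_gram[OF a b d pos] .
  have schur: "d \<ominus> m \<cdot> b = (q \<ominus> p \<cdot> m\<^sup>\<dagger>)\<^sup>\<dagger> \<cdot> (q \<ominus> p \<cdot> m\<^sup>\<dagger>)"
    using gram_schur_complement[OF p q m] normal unfolding gram by simp
  have "q \<ominus> p \<cdot> m\<^sup>\<dagger> \<in> hom X C D"
    using add_closed neg_closed comp_closed dag_closed m p q by meson
  moreover have "d \<ominus> m \<cdot> b \<in> hom X C C"
    using add_closed neg_closed comp_closed b d m by meson
  ultimately show "conditional_generator X B C a b d m"
    unfolding conditional_generator_def dagger_positive_def using m normal schur by blast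
qed (simp add: conditional_generator_def)

end

theorem mainTheorem9:
  fixes X :: "('o, 'm, 'z) dac_scheme"
  assumes "MP_dagger_additive_category X"
    and "a \<in> hom X B B" and "b \<in> hom X C B" and "d \<in> hom X C C"
    and "dagger_positive X (bp X B C) (block X B C a b (dag X b) d)"
    and "m \<in> hom X B C"
  shows "conditional_generator X B C a b d m \<longleftrightarrow> cmp X m a = dag X b"
proof -
  interpret dagger_additive X
    using assms(1) unfolding MP_dagger_additive_category_def by unfold_locales simp
  show ?thesis
    using conditional_generator_iff assms(2-6) .
qed

end
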